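(* Let $f\in\mathbb{Q}[x]$ be a univariate numerical polynomial of degree $n$. Then \[ \frac{\gcd\{kf(k)\mid k\in\mathbb{Z}\}}{\gcd\{f(k)\mid k\in\mathbb{Z}\}} \] divides $\operatorname{lcm}\{1,\ldots,n+1\}$.
   Context: A numerical polynomial is a polynomial with rational coefficients taking integer values at all integers. *)

theory Defs
  imports "HOL-Computational_Algebra.Polynomial"
begin

definition numerical_poly :: "rat poly \<Rightarrow> bool" where
  "numerical_poly f \<longleftrightarrow> (\<forall>k::int. poly f (of_int k) \<in> \<int>)"

text \<open>The integer value of f at k (meaningful for numerical polynomials).\<close>
definition int_val :: "rat poly \<Rightarrow> int \<Rightarrow> int" where
  "int_val f k = \<lfloor>poly f (of_int k)\<rfloor>"

end

theory Submission
  imports Defs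
begin

text \<open>Write \<open>F k = f(k)\<close>, \<open>\<Delta>\<close> for the forward difference, \<open>a\<^sub>j = (\<Delta>\<^sup>j F)(0)\<close>,
  \<open>G = gcd {k F(k)}\<close>, \<open>g = gcd {F(k)}\<close> and \<open>L = lcm {1..n+1}\<close>. The Leibniz rule
  \<open>\<Delta>\<^bsup>j+1\<^esup>(x F) = x \<Delta>\<^bsup>j+1\<^esup>F + (j+1) (\<Delta>\<^sup>jF)(x+1)\<close> at \<open>x = 0\<close> shows that \<open>G\<close> divides
  \<open>(j+1)(a\<^sub>j + a\<^bsub>j+1\<^esub>)\<close>. Since \<open>a\<^bsub>n+1\<^esub> = 0\<close>, descending induction on \<open>j\<close> gives
  \<open>G | L a\<^sub>j\<close>, and as \<open>F\<close> is determined by \<open>a\<^sub>0, \<dots>, a\<^sub>n\<close> (Newton's forward formula),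
  \<open>G | L F(k)\<close> for all \<open>k\<close>. Hence \<open>G | L g\<close>, and together with \<open>g | G\<close> this gives \<open>G/g | L\<close>.\<close>

definition forward_diff :: "(int \<Rightarrow> 'a::ab_group_add) \<Rightarrow> int \<Rightarrow> 'a" where
  "forward_diff F = (\<lambda>x. F (x + 1) - F x)"

lemma forward_diff_funpow_of_int:
  "(forward_diff ^^ j) (\<lambda>k. of_int (F k) :: 'a::ring_1) = (\<lambda>k. of_int ((forward_diff ^^ j) F k))"
  by (induction j) (simp_all add: forward_diff_def)

lemma forward_diff_funpow_cmult:
  "(forward_diff ^^ j) (\<lambda>k. c * F k) = (\<lambda>k. c * (forward_diff ^^ j) F k)"
  for c :: "'a::ring"
  by (induction j) (simp_all add: forward_diff_def algebra_simps)

lemma forward_diff_funpow_times_arg: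
  fixes F :: "int \<Rightarrow> 'a::comm_ring_1"
  shows "(forward_diff ^^ Suc j) (\<lambda>x. of_int x * F x) =
    (\<lambda>x. of_int x * (forward_diff ^^ Suc j) F x + of_nat (Suc j) * (forward_diff ^^ j) F (x + 1))"
proof (induction j)
  case 0
  show ?case by (simp add: forward_diff_def algebra_simps)
next
  case (Suc j)
  have "(forward_diff ^^ Suc (Suc j)) (\<lambda>x. of_int x * F x) =
      forward_diff ((forward_diff ^^ Suc j) (\<lambda>x. of_int x * F x))"
    by simp
  also have "\<dots> = forward_diff (\<lambda>x. of_int x * (forward_diff ^^ Suc j) F x
      + of_nat (Suc j) * (forward_diff ^^ j) F (x + 1))"
    by (simp only: Suc.IH)
  also have "\<dots> = (\<lambda>x. of_int x * (forward_diff ^^ Suc (Suc j)) F x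
      + of_nat (Suc (Suc j)) * (forward_diff ^^ Suc j) F (x + 1))"
    by (simp add: forward_diff_def algebra_simps)
  finally show ?case .
qed

lemma dvd_forward_diff_funpow:
  fixes F :: "int \<Rightarrow> 'a::comm_ring_1"
  shows "(\<And>k. m dvd F k) \<Longrightarrow> m dvd (forward_diff ^^ j) F k"
  by (induction j arbitrary: k) (simp_all add: forward_diff_def)

lemma dvd_if_dvd_forward_diff_funpow_at_0:
  fixes F :: "int \<Rightarrow> 'a::comm_ring_1"
  assumes "\<And>i. i < N \<Longrightarrow> m dvd (forward_diff ^^ i) F 0"
    and "(forward_diff ^^ N) F = (\<lambda>_. 0)"
  shows "m dvd F k"
  using assms
proof (induction N arbitrary: F k)
  case 0
  then show ?case by simp
next
  case (Suc N)
  have shift: "(forward_diff ^^ i) (forward_diff F) = (forward_diff ^^ Suc i) F" for i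
    by (simp only: funpow_Suc_right comp_apply)
  have "m dvd (forward_diff ^^ i) (forward_diff F) 0" if "i < N" for i
    unfolding shift using Suc.prems(1)[of "Suc i"] that by simp
  moreover have "(forward_diff ^^ N) (forward_diff F) = (\<lambda>_. 0)"
    unfolding shift by (rule Suc.prems(2))
  ultimately have diff: "m dvd forward_diff F x" for x
    by (rule Suc.IH)
  have "m dvd F 0"
    using Suc.prems(1)[of 0] by simp
  then show ?case
  proof (induction k rule: int_induct[where k = 0])
    case (step1 i)
    have "F (i + 1) = F i + forward_diff F i"
      by (simp add: forward_diff_def)
    with step1 diff show ?case
      by (metis dvd_add)
  next
    case (step2 i)
    have "F (i - 1) = F i - forward_diff F (i - 1)"
      by (simp add: forward_diff_def)
    with step2 diff show ?case
      by (metis dvd_diff)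
  qed
qed

lemma degree_pcompose_shift_minus_less:
  fixes p :: "'a::idom poly"
  assumes "degree p > 0"
  shows "degree (p \<circ>\<^sub>p [:1, 1:] - p) < degree p"
proof -
  let ?q = "p \<circ>\<^sub>p [:1, 1:]"
  have "degree ?q = degree p" and "lead_coeff ?q = lead_coeff p"
    using lead_coeff_comp[of "[:1, 1:]" p] by (simp_all add: degree_pcompose)
  then have "coeff (?q - p) (degree p) = 0" and "degree (?q - p) \<le> degree p"
    by (simp_all add: degree_diff_le)
  with assms show ?thesis
    by (metis le_neq_implies_less leading_coeff_0_iff degree_0)
qed

lemma forward_diff_poly:
  fixes p :: "'a::comm_ring_1 poly"
  shows "forward_diff (\<lambda>k. poly p (of_int k)) = (\<lambda>k. poly (p \<circ>\<^sub>p [:1, 1:] - p) (of_int k))"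
  by (simp add: fun_eq_iff forward_diff_def poly_pcompose algebra_simps)

lemma forward_diff_funpow_poly_eq_0:
  fixes p :: "'a::idom poly"
  assumes "degree p < j"
  shows "(forward_diff ^^ j) (\<lambda>k. poly p (of_int k)) = (\<lambda>_. 0)"
  using assms
proof (induction j arbitrary: p)
  case 0
  then show ?case by simp
next
  case (Suc j)
  let ?q = "p \<circ>\<^sub>p [:1, 1:] - p"
  have "(forward_diff ^^ Suc j) (\<lambda>k. poly p (of_int k)) = (forward_diff ^^ j) (\<lambda>k. poly ?q (of_int k))"
    by (simp only: funpow_Suc_right comp_def forward_diff_poly)
  also have "\<dots> = (\<lambda>_. 0)"
  proof (cases "degree p = 0")
    case True
    then have "?q = 0"
      by (metis degree_eq_zeroE pcompose_const diff_self)
    then show ?thesis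
      using Suc.IH[of 0] by (cases j) auto
  next
    case False
    then show ?thesis
      using Suc.prems degree_pcompose_shift_minus_less[of p] by (intro Suc.IH) simp
  qed
  finally show ?case .
qed

lemma dvd_Lcm_mult_if_dvd_mult_add_Suc:
  fixes a :: "nat \<Rightarrow> int"
  assumes dvd_step: "\<And>j. j \<le> n \<Longrightarrow> G dvd int (Suc j) * (a j + a (Suc j))"
    and "a (Suc n) = 0" and "j \<le> n"
  shows "G dvd Lcm {int j + 1..int n + 1} * a j"
  using \<open>j \<le> n\<close>
proof (induction j rule: inc_induct)
  case base
  then show ?case using dvd_step[of n] \<open>a (Suc n) = 0\<close> by (simp add: add.commute)
next
  case (step i)
  define M where "M = Lcm {int i + 1..int n + 1}"
  have "{int i + 1..int n + 1} = insert (int (Suc i)) {int (Suc i) + 1..int n + 1}"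
    using step.hyps by auto
  then have M: "M = lcm (int (Suc i)) (Lcm {int (Suc i) + 1..int n + 1})"
    unfolding M_def by (simp only: Lcm_insert)
  have "G dvd M * (a i + a (Suc i))"
    using dvd_step[of i] step.hyps M by (metis dvd_lcm1 dvd_trans mult_dvd_mono dvd_refl less_imp_le)
  moreover have "G dvd M * a (Suc i)"
    using step.IH M by (metis dvd_lcm2 dvd_trans mult_dvd_mono dvd_refl)
  ultimately have "G dvd M * a i"
    by (metis add_diff_cancel_right' distrib_left dvd_diff)
  then show ?case by (simp only: M_def)
qed

lemma Gcd_times_arg_dvd_Lcm_mult:
  fixes F :: "int \<Rightarrow> int"
  assumes vanish: "(forward_diff ^^ Suc n) F = (\<lambda>_. 0)"
  shows "Gcd {k * F k | k. True} dvd Lcm {1..int n + 1} * F k"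
proof -
  define G where "G = Gcd {k * F k | k. True}"
  define a where "a i = (forward_diff ^^ i) F 0" for i
  have step: "G dvd int (Suc j) * (a j + a (Suc j))" for j
  proof -
    have "G dvd (forward_diff ^^ Suc j) (\<lambda>x. of_int x * F x) 0"
      by (rule dvd_forward_diff_funpow) (auto simp: G_def intro: Gcd_dvd)
    also have "(forward_diff ^^ Suc j) (\<lambda>x. of_int x * F x) 0 = int (Suc j) * (a j + a (Suc j))"
      unfolding forward_diff_funpow_times_arg by (simp add: a_def forward_diff_def)
    finally show ?thesis .
  qed
  define L where "L = Lcm {1..int n + 1}"
  have "G dvd (forward_diff ^^ i) (\<lambda>k. L * F k) 0" if "i < Suc n" for i
  proof -
    have "G dvd Lcm {int i + 1..int n + 1} * a i"
      using step that vanish by (intro dvd_Lcm_mult_if_dvd_mult_add_Suc) (simp_all add: a_def)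
    moreover have "Lcm {int i + 1..int n + 1} dvd L"
      unfolding L_def by (rule Lcm_subset) auto
    ultimately show ?thesis
      unfolding forward_diff_funpow_cmult a_def by (meson dvd_trans mult_dvd_mono dvd_refl)
  qed
  moreover have "(forward_diff ^^ Suc n) (\<lambda>k. L * F k) = (\<lambda>_. 0)"
    by (simp only: forward_diff_funpow_cmult vanish mult_zero_right)
  ultimately show ?thesis
    unfolding G_def L_def by (rule dvd_if_dvd_forward_diff_funpow_at_0)
qed

lemma Gcd_times_arg_div_Gcd_dvd:
  fixes F :: "int \<Rightarrow> int"
  assumes "Gcd {F k | k. True} \<noteq> 0" and "\<And>k. Gcd {k * F k | k. True} dvd c * F k"
  shows "Gcd {k * F k | k. True} div Gcd {F k | k. True} dvd c"
proof -
  have "Gcd {F k | k. True} dvd Gcd {k * F k | k. True}"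
    by (rule Gcd_greatest) (force intro: dvd_mult Gcd_dvd)
  moreover have "Gcd {k * F k | k. True} dvd Gcd ((*) c ` {F k | k. True})"
    using assms(2) by (intro Gcd_greatest) auto
  then have "Gcd {k * F k | k. True} dvd c * Gcd {F k | k. True}"
    unfolding Gcd_mult by simp
  ultimately show ?thesis
    using assms(1) div_dvd_iff_mult by blast
qed

lemma of_int_int_val:
  assumes "numerical_poly f"
  shows "of_int (int_val f k) = poly f (of_int k)"
  using assms unfolding numerical_poly_def int_val_def by (metis Ints_cases floor_of_int)

lemma forward_diff_funpow_int_val_eq_0:
  assumes "numerical_poly f" and "degree f < j"
  shows "(forward_diff ^^ j) (int_val f) = (\<lambda>_. 0)"
proof -
  have "(\<lambda>k. of_int ((forward_diff ^^ j) (int_val f) k)) =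
      (forward_diff ^^ j) (\<lambda>k. of_int (int_val f k) :: rat)"
    by (rule forward_diff_funpow_of_int[symmetric])
  also have "\<dots> = (forward_diff ^^ j) (\<lambda>k. poly f (of_int k))"
    by (simp only: of_int_int_val[OF assms(1)])
  also have "\<dots> = (\<lambda>_. 0)"
    using assms(2) by (rule forward_diff_funpow_poly_eq_0)
  finally show ?thesis
    by (simp add: fun_eq_iff)
qed

lemma Gcd_int_val_neq_0:
  assumes "numerical_poly f" and "f \<noteq> 0"
  shows "Gcd {int_val f k | k. True} \<noteq> 0"
proof
  assume "Gcd {int_val f k | k. True} = 0"
  then have "int_val f k = 0" for k
    by (auto simp: Gcd_0_iff)
  then have "poly f (of_int k) = 0" for k
    using of_int_int_val[OF assms(1), of k] by simp
  then have "range (of_int :: int \<Rightarrow> rat) \<subseteq> {x. poly f x = 0}"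
    by auto
  moreover have "infinite (range (of_int :: int \<Rightarrow> rat))"
    by (metis finite_imageD infinite_UNIV_int inj_onI of_int_eq_iff)
  ultimately show False
    using poly_roots_finite[OF assms(2)] finite_subset by blast
qed

theorem lemma3p8:
  fixes f :: "rat poly" and n :: nat
  assumes "numerical_poly f"
    and "f \<noteq> 0"
    and "degree f = n"
  shows "Gcd {k * int_val f k | k. True} div Gcd {int_val f k | k. True}
           dvd Lcm {1..int n + 1}"
proof -
  have "(forward_diff ^^ Suc n) (int_val f) = (\<lambda>_. 0)"
    using assms(1,3) by (intro forward_diff_funpow_int_val_eq_0) simp_all
  from Gcd_int_val_neq_0[OF assms(1,2)] Gcd_times_arg_dvd_Lcm_mult[OF this]
  show ?thesis
    by (rule Gcd_times_arg_div_Gcd_dvd)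
qed

end
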